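(* Let $A$ be a unital $\mathrm{C}^*$-algebra containing a closed two-sided ideal $J$ and an operator system $X$. (i) If $\Pi:\mathcal{B}(X,J)\to B(H)$ is a unital $*$-representation annihilating $\mathbb{M}_2(J)$, then there is a unique $*$-representation $\pi:\mathrm{C}^*(X)+J\to B(H)$ annihilating $J$ such that the pair $(\Pi,\pi)$ is $(X,J)$-adapted. (ii) If $\pi:\mathrm{C}^*(X)+J\to B(H)$ is a unital $*$-representation annihilating $J$, then there is a unique unital $*$-representation $\Pi:\mathcal{B}(X,J)\to B(H)$ annihilating $\mathbb{M}_2(J)$ such that the pair $(\Pi,\pi)$ is $(X,J)$-adapted.
   Context: An operator system is a norm-closed self-adjoint subspace containing the unit; $\mathrm{C}^*(X)$ is the $\mathrm{C}^*$-subalgebra of $A$ generated by $X$. $\mathcal{S}(X,J)\subset\mathbb{M}_2(A)$ is the operator system of matrices $\begin{bmatrix} x & j\\ k & b\end{bmatrix}$ with $x\in X$, $j,k\in J$, $b\in J+\mathbb{C}1$; $\mathcal{B}(X,J)$ is the $\mathrm{C}^*$-algebra it generates in $\mathbb{M}_2(A)$, and it consists exactly of matrices $\begin{bmatrix} a & b\\ c & d\end{bmatrix}$ with $a\in\mathrm{C}^*(X)+J$, $b,c\in J$, $d\in J+\mathbb{C}1$. Let $\chi:J+\mathbb{C}1\to\mathbb{C}$ be the quotient map by $J$ ($\chi(j+\lambda1)=\lambda$). For $*$-representations $\Pi:\mathcal{B}(X,J)\to B(H)$ and $\pi:\mathrm{C}^*(X)+J\to B(H)$, the pair $(\Pi,\pi)$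 is $(X,J)$-adapted if $\Pi\left(\begin{bmatrix} a & b\\ c& d\end{bmatrix}\right)-\chi(d)1=\pi(a-\chi(d)1)$ for every $\begin{bmatrix} a & b\\ c& d\end{bmatrix}\in\mathcal{B}(X,J)$. *)

theory Defs
  imports "HOL-Analysis.Analysis"
begin

class cstar_algebra = real_normed_algebra_1 + banach +
  fixes ascale :: "complex \<Rightarrow> 'a \<Rightarrow> 'a"
    and astar :: "'a \<Rightarrow> 'a"
  assumes ascale_add_right: "ascale z (x + y) = ascale z x + ascale z y"
    and ascale_add_left: "ascale (z + w) x = ascale z x + ascale w x"
    and ascale_ascale: "ascale z (ascale w x) = ascale (z * w) x"
    and ascale_of_real: "ascale (complex_of_real r) x = scaleR r x"
    and ascale_mult_left: "ascale z (x * y) = ascale z x * y"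
    and ascale_mult_right: "ascale z (x * y) = x * ascale z y"
    and norm_ascale: "norm (ascale z x) = cmod z * norm x"
    and astar_astar: "astar (astar x) = x"
    and astar_add: "astar (x + y) = astar x + astar y"
    and astar_ascale: "astar (ascale z x) = ascale (cnj z) (astar x)"
    and astar_mult: "astar (x * y) = astar y * astar x"
    and cstar_identity: "norm (astar x * x) = (norm x)^2"

class complex_hilbert = ab_group_add +
  fixes hscale :: "complex \<Rightarrow> 'a \<Rightarrow> 'a"
    and hinner :: "'a \<Rightarrow> 'a \<Rightarrow> complex"
  assumes hscale_add_right: "hscale z (x + y) = hscale z x + hscale z y"
    and hscale_add_left: "hscale (z + w) x = hscale z x + hscale w x"
    and hscale_hscale: "hscale z (hscale w x) = hscale (z * w) x"
    and hscale_one: "hscale 1 x = x"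
    and hinner_add_left: "hinner (x + y) u = hinner x u + hinner y u"
    and hinner_scale_left: "hinner (hscale z x) u = z * hinner x u"
    and hinner_sym: "hinner u x = cnj (hinner x u)"
    and hinner_nonneg: "0 \<le> Re (hinner x x)"
    and hinner_definite: "hinner x x = 0 \<Longrightarrow> x = 0"
    and hilbert_complete:
      "(\<forall>e>0. \<exists>N. \<forall>m\<ge>N. \<forall>n\<ge>N. sqrt (Re (hinner (s m - s n) (s m - s n))) < e)
        \<Longrightarrow> \<exists>l. (\<lambda>n. sqrt (Re (hinner (s n - l) (s n - l)))) \<longlonglongrightarrow> 0"

definition hnorm :: "'h::complex_hilbert \<Rightarrow> real" where
  "hnorm x = sqrt (Re (hinner x x))"

definition BH :: "('h::complex_hilbert \<Rightarrow> 'h) set" where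
  "BH = {T. (\<forall>x y. T (x + y) = T x + T y) \<and> (\<forall>z x. T (hscale z x) = hscale z (T x))
           \<and> (\<exists>K. \<forall>x. hnorm (T x) \<le> K * hnorm x)}"

definition hadj :: "('h::complex_hilbert \<Rightarrow> 'h) \<Rightarrow> ('h \<Rightarrow> 'h)" where
  "hadj T = (SOME S. \<forall>x y. hinner (T x) y = hinner x (S y))"

definition star_rep_on ::
  "'b set \<Rightarrow> ('b \<Rightarrow> 'b \<Rightarrow> 'b) \<Rightarrow> ('b \<Rightarrow> 'b \<Rightarrow> 'b) \<Rightarrow> (complex \<Rightarrow> 'b \<Rightarrow> 'b)
     \<Rightarrow> ('b \<Rightarrow> 'b) \<Rightarrow> ('b \<Rightarrow> 'h::complex_hilbert \<Rightarrow> 'h) \<Rightarrow> bool" where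
  "star_rep_on D add mul sc st pi_rep \<longleftrightarrow>
     (\<forall>a\<in>D. pi_rep a \<in> BH) \<and>
     (\<forall>a\<in>D. \<forall>b\<in>D. pi_rep (add a b) = (\<lambda>h. pi_rep a h + pi_rep b h)) \<and>
     (\<forall>a\<in>D. \<forall>b\<in>D. pi_rep (mul a b) = pi_rep a \<circ> pi_rep b) \<and>
     (\<forall>z. \<forall>a\<in>D. pi_rep (sc z a) = (\<lambda>h. hscale z (pi_rep a h))) \<and>
     (\<forall>a\<in>D. pi_rep (st a) = hadj (pi_rep a))"

definition csubspace :: "'a::cstar_algebra set \<Rightarrow> bool" where
  "csubspace S \<longleftrightarrow> 0 \<in> S \<and> (\<forall>x\<in>S. \<forall>y\<in>S. x + y \<in> S) \<and> (\<forall>z. \<forall>x\<in>S. ascale z x \<in> S)"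

definition operator_system :: "'a::cstar_algebra set \<Rightarrow> bool" where
  "operator_system X \<longleftrightarrow> csubspace X \<and> closed X \<and> (\<forall>x\<in>X. astar x \<in> X) \<and> 1 \<in> X"

definition closed_ideal :: "'a::cstar_algebra set \<Rightarrow> bool" where
  "closed_ideal J \<longleftrightarrow> csubspace J \<and> closed J \<and> (\<forall>a. \<forall>j\<in>J. a * j \<in> J \<and> j * a \<in> J)"

definition cstar_subalgebra :: "'a::cstar_algebra set \<Rightarrow> bool" where
  "cstar_subalgebra B \<longleftrightarrow> csubspace B \<and> closed B \<and> (\<forall>x\<in>B. astar x \<in> B)
     \<and> (\<forall>x\<in>B. \<forall>y\<in>B. x * y \<in> B)"

definition cstar_gen :: "'a::cstar_algebra set \<Rightarrow> 'a set" where
  "cstar_gen X = \<Inter>{B. X \<subseteq> B \<and> cstar_subalgebra B}"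

definition sum_set :: "'a::cstar_algebra set \<Rightarrow> 'a set \<Rightarrow> 'a set" where
  "sum_set S T = {s + t | s t. s \<in> S \<and> t \<in> T}"

definition unitization_set :: "'a::cstar_algebra set \<Rightarrow> 'a set" where
  "unitization_set J = {j + ascale c 1 | j c. j \<in> J}"

definition chi :: "'a::cstar_algebra set \<Rightarrow> 'a \<Rightarrow> complex" where
  "chi J d = (SOME c. d - ascale c 1 \<in> J)"

datatype 'a mat2 = M2 'a 'a 'a 'a

fun m2add :: "'a::cstar_algebra mat2 \<Rightarrow> 'a mat2 \<Rightarrow> 'a mat2" where
  "m2add (M2 a b c d) (M2 a' b' c' d') = M2 (a + a') (b + b') (c + c') (d + d')"

fun m2mult :: "'a::cstar_algebra mat2 \<Rightarrow> 'a mat2 \<Rightarrow> 'a mat2" where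
  "m2mult (M2 a b c d) (M2 a' b' c' d') =
     M2 (a * a' + b * c') (a * b' + b * d') (c * a' + d * c') (c * b' + d * d')"

fun m2scale :: "complex \<Rightarrow> 'a::cstar_algebra mat2 \<Rightarrow> 'a mat2" where
  "m2scale z (M2 a b c d) = M2 (ascale z a) (ascale z b) (ascale z c) (ascale z d)"

fun m2adj :: "'a::cstar_algebra mat2 \<Rightarrow> 'a mat2" where
  "m2adj (M2 a b c d) = M2 (astar a) (astar c) (astar b) (astar d)"

definition m2one :: "'a::cstar_algebra mat2" where
  "m2one = M2 1 0 0 1"

definition M2_of :: "'a::cstar_algebra set \<Rightarrow> 'a mat2 set" where
  "M2_of J = {M2 a b c d | a b c d. a \<in> J \<and> b \<in> J \<and> c \<in> J \<and> d \<in> J}"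

text \<open>B(X,J), via its explicit description.\<close>
definition BXJ :: "'a::cstar_algebra set \<Rightarrow> 'a set \<Rightarrow> 'a mat2 set" where
  "BXJ X J = {M2 a b c d | a b c d. a \<in> sum_set (cstar_gen X) J \<and> b \<in> J \<and> c \<in> J
                \<and> d \<in> unitization_set J}"

definition adapted ::
  "'a::cstar_algebra set \<Rightarrow> 'a set \<Rightarrow> ('a mat2 \<Rightarrow> 'h::complex_hilbert \<Rightarrow> 'h) \<Rightarrow> ('a \<Rightarrow> 'h \<Rightarrow> 'h) \<Rightarrow> bool" where
  "adapted X J Pi_rep pi_rep \<longleftrightarrow>
     (\<forall>a b c d. M2 a b c d \<in> BXJ X J \<longrightarrow>
        (\<lambda>h. Pi_rep (M2 a b c d) h - hscale (chi J d) h) = pi_rep (a - ascale (chi J d) 1))"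

definition is_rep_A :: "'a::cstar_algebra set \<Rightarrow> ('a \<Rightarrow> 'h::complex_hilbert \<Rightarrow> 'h) \<Rightarrow> bool" where
  "is_rep_A D pi_rep \<longleftrightarrow> star_rep_on D (+) (*) ascale astar pi_rep"

definition is_rep_M2 :: "'a::cstar_algebra mat2 set \<Rightarrow> ('a mat2 \<Rightarrow> 'h::complex_hilbert \<Rightarrow> 'h) \<Rightarrow> bool" where
  "is_rep_M2 D Pi_rep \<longleftrightarrow> star_rep_on D m2add m2mult m2scale m2adj Pi_rep"

end

theory Submission
  imports Defs
begin

text \<open>Modulo \<open>M\<^sub>2(J)\<close>, a matrix \<open>[a, b; c, j + \<lambda>1]\<close> of \<open>B(X,J)\<close> is the corner matrix
\<open>[a - \<lambda>1, 0; 0, 0]\<close> plus the scalar \<open>\<lambda>1\<close>. So a unital representation \<open>\<Pi>\<close> killing \<open>M\<^sub>2(J)\<close> is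
adapted to \<open>\<pi>\<close> exactly when \<open>\<pi>\<close> is its restriction \<open>a \<mapsto> \<Pi>[a, 0; 0, 0]\<close> to the upper left
corner; and a unital \<open>\<pi>\<close> killing \<open>J\<close> is adapted to \<open>\<Pi>\<close> exactly when \<open>\<Pi>\<close> is the compression
\<open>m \<mapsto> \<pi>(m\<^sub>1\<^sub>1)\<close>, which is multiplicative on \<open>B(X,J)\<close> because the upper left entry of a product
differs from the product of the upper left entries by \<open>b c' \<in> J\<close>. Both characterisations give
existence and uniqueness at once.\<close>

lemma ascale_zero_left [simp]: "ascale 0 x = (0::'a::cstar_algebra)"
  using ascale_of_real[of 0 x] by simp

lemma ascale_one_left [simp]: "ascale 1 x = (x::'a::cstar_algebra)"
  using ascale_of_real[of 1 x] by simp

lemma ascale_zero_right [simp]: "ascale z 0 = (0::'a::cstar_algebra)"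
  using ascale_add_right[of z "0::'a" 0] by simp

lemma ascale_minus_left: "ascale (- z) x = - ascale z (x::'a::cstar_algebra)"
  using ascale_add_left[of z "- z" x] by (simp add: add_eq_0_iff2 minus_equation_iff)

lemma ascale_diff_left: "ascale (z - w) x = ascale z x - ascale w (x::'a::cstar_algebra)"
  using ascale_add_left[of z "- w" x] by (simp add: ascale_minus_left)

lemma astar_zero [simp]: "astar 0 = (0::'a::cstar_algebra)"
  using astar_add[of "0::'a" 0] by simp

lemma hscale_zero_left [simp]: "hscale 0 x = (0::'h::complex_hilbert)"
  using hscale_add_left[of 0 0 x] by simp

lemma hscale_minus_left: "hscale (- z) x = - hscale z (x::'h::complex_hilbert)"
  using hscale_add_left[of z "- z" x] by (simp add: add_eq_0_iff2 minus_equation_iff)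

lemma csubspace_zero: "csubspace S \<Longrightarrow> 0 \<in> S"
  unfolding csubspace_def by blast

lemma csubspace_add: "csubspace S \<Longrightarrow> x \<in> S \<Longrightarrow> y \<in> S \<Longrightarrow> x + y \<in> S"
  unfolding csubspace_def by blast

lemma csubspace_ascale: "csubspace S \<Longrightarrow> x \<in> S \<Longrightarrow> ascale z x \<in> S"
  unfolding csubspace_def by blast

lemma csubspace_diff: "csubspace S \<Longrightarrow> x \<in> S \<Longrightarrow> y \<in> S \<Longrightarrow> x - y \<in> S"
  using csubspace_add[of S x "ascale (- 1) y"] csubspace_ascale[of S y "- 1"]
  by (simp add: ascale_minus_left)

lemma closed_ideal_csubspace: "closed_ideal J \<Longrightarrow> csubspace J"
  unfolding closed_ideal_def by blast

lemma closed_ideal_mult_left: "closed_ideal J \<Longrightarrow> j \<in> J \<Longrightarrow> a * j \<in> J"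
  unfolding closed_ideal_def by blast

lemma closed_ideal_mult_right: "closed_ideal J \<Longrightarrow> j \<in> J \<Longrightarrow> j * a \<in> J"
  unfolding closed_ideal_def by blast

lemma cstar_subalgebra_csubspace: "cstar_subalgebra B \<Longrightarrow> csubspace B"
  unfolding cstar_subalgebra_def by blast

lemma cstar_subalgebra_mult: "cstar_subalgebra B \<Longrightarrow> x \<in> B \<Longrightarrow> y \<in> B \<Longrightarrow> x * y \<in> B"
  unfolding cstar_subalgebra_def by blast

lemma cstar_subalgebra_cstar_gen: "cstar_subalgebra (cstar_gen X)"
  unfolding cstar_gen_def cstar_subalgebra_def csubspace_def by (auto intro: closed_Inter)

lemma cstar_gen_superset: "X \<subseteq> cstar_gen X"
  unfolding cstar_gen_def by blast

lemma csubspace_sum_set: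
  assumes S: "csubspace S" and T: "csubspace T"
  shows "csubspace (sum_set S T)"
  unfolding csubspace_def sum_set_def
proof (intro conjI ballI allI)
  show "0 \<in> {s + t |s t. s \<in> S \<and> t \<in> T}"
    using csubspace_zero[OF S] csubspace_zero[OF T] by force
next
  fix x y assume "x \<in> {s + t |s t. s \<in> S \<and> t \<in> T}" "y \<in> {s + t |s t. s \<in> S \<and> t \<in> T}"
  then obtain s t s' t' where "x = s + t" "y = s' + t'" "s \<in> S" "t \<in> T" "s' \<in> S" "t' \<in> T"
    by blast
  moreover have "x + y = (s + s') + (t + t')" using calculation by (simp add: algebra_simps)
  ultimately show "x + y \<in> {s + t |s t. s \<in> S \<and> t \<in> T}"
    using csubspace_add[OF S] csubspace_add[OF T] by blast
next
  fix z x assume "x \<in> {s + t |s t. s \<in> S \<and> t \<in> T}"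
  then obtain s t where "x = s + t" "s \<in> S" "t \<in> T" by blast
  then show "ascale z x \<in> {s + t |s t. s \<in> S \<and> t \<in> T}"
    using csubspace_ascale[OF S] csubspace_ascale[OF T] by (force simp: ascale_add_right)
qed

lemma sum_set_mult:
  assumes B: "cstar_subalgebra B" and J: "closed_ideal J"
    and "x \<in> sum_set B J" "y \<in> sum_set B J"
  shows "x * y \<in> sum_set B J"
proof -
  obtain b j b' j' where "x = b + j" "y = b' + j'" "b \<in> B" "j \<in> J" "b' \<in> B" "j' \<in> J"
    using assms(3,4) unfolding sum_set_def by blast
  moreover have "x * y = b * b' + (b * j' + j * y)"
    using calculation by (simp add: algebra_simps)
  moreover have "b * j' + j * y \<in> J"
    using calculation closed_ideal_mult_left[OF J] closed_ideal_mult_right[OF J]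
      csubspace_add[OF closed_ideal_csubspace[OF J]] by blast
  ultimately show ?thesis
    using cstar_subalgebra_mult[OF B] unfolding sum_set_def by blast
qed

lemma subset_sum_set_right: "csubspace S \<Longrightarrow> T \<subseteq> sum_set S T"
  unfolding sum_set_def by (force dest: csubspace_zero)

lemma subset_sum_set_left: "csubspace T \<Longrightarrow> S \<subseteq> sum_set S T"
  unfolding sum_set_def by (force dest: csubspace_zero)

lemma one_in_sum_set_cstar_gen:
  "operator_system X \<Longrightarrow> closed_ideal J \<Longrightarrow> 1 \<in> sum_set (cstar_gen X) J"
  using cstar_gen_superset subset_sum_set_left[OF closed_ideal_csubspace]
  unfolding operator_system_def by blast

lemma chi_unitization:
  assumes J: "csubspace J" and "1 \<notin> J" and j: "j \<in> J"
  shows "chi J (j + ascale c 1) = c"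
proof (rule ccontr)
  let ?c = "chi J (j + ascale c 1)"
  assume ne: "?c \<noteq> c"
  have "j + ascale c 1 - ascale ?c 1 \<in> J"
    unfolding chi_def by (rule someI[of _ c]) (simp add: j)
  then have "(j + ascale c 1 - ascale ?c 1) - j \<in> J"
    using csubspace_diff[OF J _ j] by blast
  then have "ascale (c - ?c) (1::'a) \<in> J"
    by (simp add: ascale_diff_left)
  then have "ascale (1 / (c - ?c)) (ascale (c - ?c) (1::'a)) \<in> J"
    using csubspace_ascale[OF J] by blast
  then show False
    using ne \<open>1 \<notin> J\<close> by (simp add: ascale_ascale)
qed

lemma M2_in_BXJ_iff:
  "M2 a b c d \<in> BXJ X J \<longleftrightarrow>
     a \<in> sum_set (cstar_gen X) J \<and> b \<in> J \<and> c \<in> J \<and> d \<in> unitization_set J"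
  unfolding BXJ_def by blast

lemma M2_in_M2_of_iff: "M2 a b c d \<in> M2_of J \<longleftrightarrow> a \<in> J \<and> b \<in> J \<and> c \<in> J \<and> d \<in> J"
  unfolding M2_of_def by blast

lemma unitization_setI: "j \<in> J \<Longrightarrow> j + ascale c 1 \<in> unitization_set J"
  unfolding unitization_set_def by blast

lemma subset_unitization_set: "J \<subseteq> unitization_set J"
  using unitization_setI[of _ J 0] by auto

lemma m2one_in_BXJ:
  assumes "operator_system X" and "closed_ideal J"
  shows "m2one \<in> BXJ X J"
  using one_in_sum_set_cstar_gen[OF assms] unitization_setI[of 0 J 1]
    csubspace_zero[OF closed_ideal_csubspace[OF assms(2)]]
  unfolding m2one_def M2_in_BXJ_iff by simp

lemma corner_in_BXJ:
  "closed_ideal J \<Longrightarrow> a \<in> sum_set (cstar_gen X) J \<Longrightarrow> M2 a 0 0 0 \<in> BXJ X J"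
  using csubspace_zero[OF closed_ideal_csubspace] subset_unitization_set
  by (auto simp: M2_in_BXJ_iff)

lemma id_eq_zero_imp_fun_eq:
  assumes "(id :: 'h \<Rightarrow> 'h) = (\<lambda>_. 0)"
  shows "(f :: 'b \<Rightarrow> 'h::zero) = g"
proof
  fix x
  have "\<And>v::'h. v = 0" using fun_cong[OF assms] by simp
  then show "f x = g x" by metis
qed

lemma is_rep_A_upper_left_corner:
  assumes Pi: "is_rep_M2 M Pi_rep" and D: "\<And>a. a \<in> D \<Longrightarrow> M2 a 0 0 0 \<in> M"
  shows "is_rep_A D (\<lambda>a. Pi_rep (M2 a 0 0 0))"
  unfolding is_rep_A_def star_rep_on_def
proof (intro conjI ballI allI)
  fix a b assume "a \<in> D" "b \<in> D"
  then have "M2 a 0 0 0 \<in> M" "M2 b 0 0 0 \<in> M" using D by blast+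
  then have "Pi_rep (m2add (M2 a 0 0 0) (M2 b 0 0 0)) = (\<lambda>h. Pi_rep (M2 a 0 0 0) h + Pi_rep (M2 b 0 0 0) h)"
    and "Pi_rep (m2mult (M2 a 0 0 0) (M2 b 0 0 0)) = Pi_rep (M2 a 0 0 0) \<circ> Pi_rep (M2 b 0 0 0)"
    using Pi unfolding is_rep_M2_def star_rep_on_def by blast+
  then show "Pi_rep (M2 (a + b) 0 0 0) = (\<lambda>h. Pi_rep (M2 a 0 0 0) h + Pi_rep (M2 b 0 0 0) h)"
    and "Pi_rep (M2 (a * b) 0 0 0) = Pi_rep (M2 a 0 0 0) \<circ> Pi_rep (M2 b 0 0 0)"
    by simp_all
next
  fix a z assume "a \<in> D"
  then have "M2 a 0 0 0 \<in> M" using D by blast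
  then have "Pi_rep (M2 a 0 0 0) \<in> BH"
    and "Pi_rep (m2scale z (M2 a 0 0 0)) = (\<lambda>h. hscale z (Pi_rep (M2 a 0 0 0) h))"
    and "Pi_rep (m2adj (M2 a 0 0 0)) = hadj (Pi_rep (M2 a 0 0 0))"
    using Pi unfolding is_rep_M2_def star_rep_on_def by blast+
  then show "Pi_rep (M2 a 0 0 0) \<in> BH"
    and "Pi_rep (M2 (ascale z a) 0 0 0) = (\<lambda>h. hscale z (Pi_rep (M2 a 0 0 0) h))"
    and "Pi_rep (M2 (astar a) 0 0 0) = hadj (Pi_rep (M2 a 0 0 0))"
    by simp_all
qed

fun upper_left :: "'a mat2 \<Rightarrow> 'a" where
  "upper_left (M2 a b c d) = a"

lemma is_rep_M2_upper_left:
  assumes B: "cstar_subalgebra B" and J: "closed_ideal J"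
    and pi: "is_rep_A (sum_set B J) pi_rep" and pi_J: "\<forall>j\<in>J. pi_rep j = (\<lambda>_. 0)"
    and M: "\<And>a b c d. M2 a b c d \<in> M \<Longrightarrow> a \<in> sum_set B J \<and> b \<in> J"
  shows "is_rep_M2 M (\<lambda>m. pi_rep (upper_left m))"
  unfolding is_rep_M2_def star_rep_on_def
proof (intro conjI ballI allI)
  fix m n assume "m \<in> M" "n \<in> M"
  then obtain a b c d a' b' c' d' where m: "m = M2 a b c d" and n: "n = M2 a' b' c' d'"
    and a: "a \<in> sum_set B J" and b: "b \<in> J" and a': "a' \<in> sum_set B J"
    using M by (metis mat2.exhaust)
  have bc': "b * c' \<in> J"
    using closed_ideal_mult_right[OF J b] .
  have "pi_rep (a * a' + b * c') = (\<lambda>h. pi_rep (a * a') h + pi_rep (b * c') h)"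
    using pi sum_set_mult[OF B J a a'] subset_sum_set_right[OF cstar_subalgebra_csubspace[OF B]] bc'
    unfolding is_rep_A_def star_rep_on_def by blast
  also have "\<dots> = pi_rep a \<circ> pi_rep a'"
    using pi a a' pi_J bc' unfolding is_rep_A_def star_rep_on_def by auto
  finally show "pi_rep (upper_left (m2mult m n)) = pi_rep (upper_left m) \<circ> pi_rep (upper_left n)"
    by (simp add: m n)
  show "pi_rep (upper_left (m2add m n)) = (\<lambda>h. pi_rep (upper_left m) h + pi_rep (upper_left n) h)"
    using pi a a' unfolding m n is_rep_A_def star_rep_on_def by simp
next
  fix m assume "m \<in> M"
  then obtain a b c d where m: "m = M2 a b c d" and a: "a \<in> sum_set B J"
    using M by (metis mat2.exhaust)
  fix z
  have "pi_rep a \<in> BH" and "pi_rep (astar a) = hadj (pi_rep a)"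
    and "pi_rep (ascale z a) = (\<lambda>h. hscale z (pi_rep a h))"
    using pi a unfolding is_rep_A_def star_rep_on_def by blast+
  then show "pi_rep (upper_left m) \<in> BH" and "pi_rep (upper_left (m2adj m)) = hadj (pi_rep (upper_left m))"
    and "pi_rep (upper_left (m2scale z m)) = (\<lambda>h. hscale z (pi_rep (upper_left m) h))"
    by (simp_all add: m)
qed

lemma rep_minus_scalar:
  assumes "is_rep_A D pi_rep" and "csubspace D" and "1 \<in> D" and "pi_rep 1 = id" and "a \<in> D"
  shows "pi_rep (a - ascale k 1) = (\<lambda>h. pi_rep a h - hscale k h)"
proof -
  have "pi_rep (a + ascale (- k) 1) = (\<lambda>h. pi_rep a h + pi_rep (ascale (- k) 1) h)"
    using assms csubspace_ascale unfolding is_rep_A_def star_rep_on_def by blast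
  also have "\<dots> = (\<lambda>h. pi_rep a h - hscale k h)"
    using assms unfolding is_rep_A_def star_rep_on_def by (simp add: hscale_minus_left)
  finally show ?thesis
    by (simp add: ascale_minus_left)
qed

lemma csubspace_sum_set_cstar_gen: "closed_ideal J \<Longrightarrow> csubspace (sum_set (cstar_gen X) J)"
  by (intro csubspace_sum_set cstar_subalgebra_csubspace cstar_subalgebra_cstar_gen
      closed_ideal_csubspace)

lemma adapted_iff_upper_left:
  assumes J: "closed_ideal J" and X: "operator_system X"
    and pi: "is_rep_A (sum_set (cstar_gen X) J) pi_rep" and pi_1: "pi_rep 1 = id"
  shows "adapted X J Pi_rep pi_rep \<longleftrightarrow> (\<forall>m\<in>BXJ X J. Pi_rep m = pi_rep (upper_left m))"
proof -
  note minus_scalar = rep_minus_scalar[OF pi csubspace_sum_set_cstar_gen[OF J]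
      one_in_sum_set_cstar_gen[OF X J] pi_1]
  have "adapted X J Pi_rep pi_rep \<longleftrightarrow> (\<forall>a b c d. M2 a b c d \<in> BXJ X J \<longrightarrow>
      (\<lambda>h. Pi_rep (M2 a b c d) h - hscale (chi J d) h) = (\<lambda>h. pi_rep a h - hscale (chi J d) h))"
    unfolding adapted_def by (auto simp: M2_in_BXJ_iff minus_scalar)
  also have "\<dots> \<longleftrightarrow> (\<forall>a b c d. M2 a b c d \<in> BXJ X J \<longrightarrow> Pi_rep (M2 a b c d) = pi_rep a)"
    by (simp add: fun_eq_iff)
  also have "\<dots> \<longleftrightarrow> (\<forall>m\<in>BXJ X J. Pi_rep m = pi_rep (upper_left m))"
    by (metis mat2.exhaust upper_left.simps)
  finally show ?thesis .
qed

lemma rep_BXJ_eq_corner_plus_scalar: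
  assumes J: "closed_ideal J" and X: "operator_system X"
    and Pi: "is_rep_M2 (BXJ X J) Pi_rep" and Pi_1: "Pi_rep m2one = id"
    and Pi_J: "\<forall>m\<in>M2_of J. Pi_rep m = (\<lambda>_. 0)"
    and m: "M2 a b c (j + ascale l 1) \<in> BXJ X J" and j: "j \<in> J"
  shows "Pi_rep (M2 a b c (j + ascale l 1)) = (\<lambda>h. Pi_rep (M2 (a - ascale l 1) 0 0 0) h + hscale l h)"
proof -
  let ?D = "sum_set (cstar_gen X) J"
  have D: "csubspace ?D" and one: "1 \<in> ?D" and J0: "0 \<in> J"
    using csubspace_sum_set_cstar_gen[OF J] one_in_sum_set_cstar_gen[OF X J]
      csubspace_zero[OF closed_ideal_csubspace[OF J]] by blast+
  have a: "a \<in> ?D" and b: "b \<in> J" and c: "c \<in> J"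
    using m by (simp_all add: M2_in_BXJ_iff)
  have corner: "M2 (a - ascale l 1) 0 0 0 \<in> BXJ X J"
    using corner_in_BXJ[OF J csubspace_diff[OF D a csubspace_ascale[OF D one]]] .
  have offdiag: "M2 0 b c j \<in> BXJ X J" and offdiag_J: "M2 0 b c j \<in> M2_of J"
    using b c j J0 csubspace_zero[OF D] subset_unitization_set
    by (auto simp: M2_in_BXJ_iff M2_in_M2_of_iff)
  have scalar: "m2scale l m2one \<in> BXJ X J"
    using m2one_in_BXJ[OF X J] csubspace_ascale[OF D one] unitization_setI[OF J0, of l]
    by (simp add: m2one_def M2_in_BXJ_iff)
  have rest: "m2add (M2 0 b c j) (m2scale l m2one) \<in> BXJ X J"
    using csubspace_ascale[OF D one] b c unitization_setI[OF j, of l]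
    by (simp add: m2one_def M2_in_BXJ_iff)
  have "M2 a b c (j + ascale l 1) = m2add (M2 (a - ascale l 1) 0 0 0) (m2add (M2 0 b c j) (m2scale l m2one))"
    by (simp add: m2one_def)
  also have "Pi_rep \<dots> = (\<lambda>h. Pi_rep (M2 (a - ascale l 1) 0 0 0) h
      + (Pi_rep (M2 0 b c j) h + Pi_rep (m2scale l m2one) h))"
    using Pi corner offdiag scalar rest unfolding is_rep_M2_def star_rep_on_def by simp
  finally show ?thesis
    using Pi Pi_1 Pi_J offdiag_J m2one_in_BXJ[OF X J] unfolding is_rep_M2_def star_rep_on_def
    by simp
qed

lemma adapted_iff_upper_left_corner:
  fixes Pi_rep :: "'a::cstar_algebra mat2 \<Rightarrow> 'h::complex_hilbert \<Rightarrow> 'h"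
  assumes J: "closed_ideal J" and X: "operator_system X"
    and Pi: "is_rep_M2 (BXJ X J) Pi_rep" and Pi_1: "Pi_rep m2one = id"
    and Pi_J: "\<forall>m\<in>M2_of J. Pi_rep m = (\<lambda>_. 0)"
  shows "adapted X J Pi_rep pi_rep \<longleftrightarrow>
    (\<forall>a\<in>sum_set (cstar_gen X) J. pi_rep a = Pi_rep (M2 a 0 0 0))"
proof (cases "1 \<in> J")
  case True
  \<comment> \<open>\<open>chi J\<close> is then junk, but \<open>\<Pi>(1)\<close> is both \<open>id\<close> and \<open>0\<close>, so \<open>H = 0\<close>.\<close>
  then have "m2one \<in> M2_of J"
    using csubspace_zero[OF closed_ideal_csubspace[OF J]] by (simp add: m2one_def M2_in_M2_of_iff)
  then have "(id :: 'h \<Rightarrow> 'h) = (\<lambda>_. 0)"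
    using Pi_1 Pi_J by simp
  then have trivial: "\<And>f g :: 'h \<Rightarrow> 'h. f = g"
    by (rule id_eq_zero_imp_fun_eq)
  have "adapted X J Pi_rep pi_rep"
    unfolding adapted_def by (intro allI impI trivial)
  moreover have "\<forall>a\<in>sum_set (cstar_gen X) J. pi_rep a = Pi_rep (M2 a 0 0 0)"
    by (intro ballI trivial)
  ultimately show ?thesis
    by blast
next
  case False
  let ?D = "sum_set (cstar_gen X) J"
  have D: "csubspace ?D" and one: "1 \<in> ?D" and J0: "0 \<in> J"
    using csubspace_sum_set_cstar_gen[OF J] one_in_sum_set_cstar_gen[OF X J]
      csubspace_zero[OF closed_ideal_csubspace[OF J]] by blast+
  note chi = chi_unitization[OF closed_ideal_csubspace[OF J] False]
  show ?thesis
  proof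
    assume adapted: "adapted X J Pi_rep pi_rep"
    show "\<forall>a\<in>?D. pi_rep a = Pi_rep (M2 a 0 0 0)"
    proof
      fix a assume "a \<in> ?D"
      then have "(\<lambda>h. Pi_rep (M2 a 0 0 0) h - hscale (chi J 0) h) = pi_rep (a - ascale (chi J 0) 1)"
        using adapted corner_in_BXJ[OF J] unfolding adapted_def by blast
      moreover have "chi J 0 = 0"
        using chi[OF J0, of 0] by simp
      ultimately show "pi_rep a = Pi_rep (M2 a 0 0 0)"
        by simp
    qed
  next
    assume corner: "\<forall>a\<in>?D. pi_rep a = Pi_rep (M2 a 0 0 0)"
    show "adapted X J Pi_rep pi_rep"
      unfolding adapted_def
    proof (intro allI impI)
      fix a b c d assume m: "M2 a b c d \<in> BXJ X J"
      then obtain j l where j: "j \<in> J" and d: "d = j + ascale l 1"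
        by (auto simp: M2_in_BXJ_iff unitization_set_def)
      have "a - ascale l 1 \<in> ?D"
        using m csubspace_diff[OF D _ csubspace_ascale[OF D one]] by (simp add: M2_in_BXJ_iff)
      then show "(\<lambda>h. Pi_rep (M2 a b c d) h - hscale (chi J d) h) = pi_rep (a - ascale (chi J d) 1)"
        using rep_BXJ_eq_corner_plus_scalar[OF J X Pi Pi_1 Pi_J, of a b c j l] m j corner
        by (simp add: d chi)
    qed
  qed
qed



theorem lemma2p5:
  fixes X J :: "'a::cstar_algebra set"
  assumes "closed_ideal J" and "operator_system X"
  shows "(\<forall>Pi_rep :: 'a mat2 \<Rightarrow> 'h::complex_hilbert \<Rightarrow> 'h.
            is_rep_M2 (BXJ X J) Pi_rep \<and> Pi_rep m2one = id \<and> (\<forall>m\<in>M2_of J. Pi_rep m = (\<lambda>_. 0)) \<longrightarrow>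
            (\<exists>pi_rep. is_rep_A (sum_set (cstar_gen X) J) pi_rep \<and> (\<forall>j\<in>J. pi_rep j = (\<lambda>_. 0))
                  \<and> adapted X J Pi_rep pi_rep \<and>
                 (\<forall>pi_rep'. is_rep_A (sum_set (cstar_gen X) J) pi_rep' \<and> (\<forall>j\<in>J. pi_rep' j = (\<lambda>_. 0))
                        \<and> adapted X J Pi_rep pi_rep' \<longrightarrow> (\<forall>a\<in>sum_set (cstar_gen X) J. pi_rep' a = pi_rep a))))
       \<and> (\<forall>pi_rep :: 'a \<Rightarrow> 'h \<Rightarrow> 'h.
            is_rep_A (sum_set (cstar_gen X) J) pi_rep \<and> pi_rep 1 = id \<and> (\<forall>j\<in>J. pi_rep j = (\<lambda>_. 0)) \<longrightarrow>
            (\<exists>Pi_rep. is_rep_M2 (BXJ X J) Pi_rep \<and> Pi_rep m2one = id \<and> (\<forall>m\<in>M2_of J. Pi_rep m = (\<lambda>_. 0))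
                  \<and> adapted X J Pi_rep pi_rep \<and>
                 (\<forall>Pi_rep'. is_rep_M2 (BXJ X J) Pi_rep' \<and> Pi_rep' m2one = id \<and> (\<forall>m\<in>M2_of J. Pi_rep' m = (\<lambda>_. 0))
                        \<and> adapted X J Pi_rep' pi_rep \<longrightarrow> (\<forall>m\<in>BXJ X J. Pi_rep' m = Pi_rep m))))"

proof -
  let ?D = "sum_set (cstar_gen X) J"
  have J0: "0 \<in> J"
    using csubspace_zero[OF closed_ideal_csubspace[OF assms(1)]] .
  show ?thesis
  proof (intro conjI allI impI)
    fix Pi_rep :: "'a mat2 \<Rightarrow> 'h \<Rightarrow> 'h"
    assume "is_rep_M2 (BXJ X J) Pi_rep \<and> Pi_rep m2one = id \<and> (\<forall>m\<in>M2_of J. Pi_rep m = (\<lambda>_. 0))"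
    then have Pi: "is_rep_M2 (BXJ X J) Pi_rep" and Pi_1: "Pi_rep m2one = id"
      and Pi_J: "\<forall>m\<in>M2_of J. Pi_rep m = (\<lambda>_. 0)"
      by blast+
    have "is_rep_A ?D (\<lambda>a. Pi_rep (M2 a 0 0 0))"
      using is_rep_A_upper_left_corner[OF Pi corner_in_BXJ[OF assms(1)]] .
    moreover have "\<forall>j\<in>J. Pi_rep (M2 j 0 0 0) = (\<lambda>_. 0)"
      using Pi_J J0 by (simp add: M2_in_M2_of_iff)
    ultimately show "\<exists>pi_rep. is_rep_A ?D pi_rep \<and> (\<forall>j\<in>J. pi_rep j = (\<lambda>_. 0))
        \<and> adapted X J Pi_rep pi_rep \<and>
        (\<forall>pi_rep'. is_rep_A ?D pi_rep' \<and> (\<forall>j\<in>J. pi_rep' j = (\<lambda>_. 0))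
          \<and> adapted X J Pi_rep pi_rep' \<longrightarrow> (\<forall>a\<in>?D. pi_rep' a = pi_rep a))"
      by (intro exI[of _ "\<lambda>a. Pi_rep (M2 a 0 0 0)"])
        (simp add: adapted_iff_upper_left_corner[OF assms Pi Pi_1 Pi_J])
  next
    fix pi_rep :: "'a \<Rightarrow> 'h \<Rightarrow> 'h"
    assume "is_rep_A ?D pi_rep \<and> pi_rep 1 = id \<and> (\<forall>j\<in>J. pi_rep j = (\<lambda>_. 0))"
    then have pi: "is_rep_A ?D pi_rep" and pi_1: "pi_rep 1 = id"
      and pi_J: "\<forall>j\<in>J. pi_rep j = (\<lambda>_. 0)"
      by blast+
    have "is_rep_M2 (BXJ X J) (\<lambda>m. pi_rep (upper_left m))"
      by (rule is_rep_M2_upper_left[OF cstar_subalgebra_cstar_gen assms(1) pi pi_J])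
        (simp add: M2_in_BXJ_iff)
    moreover have "\<forall>m\<in>M2_of J. pi_rep (upper_left m) = (\<lambda>_. 0)"
      using pi_J unfolding M2_of_def by auto
    ultimately show "\<exists>Pi_rep. is_rep_M2 (BXJ X J) Pi_rep \<and> Pi_rep m2one = id
        \<and> (\<forall>m\<in>M2_of J. Pi_rep m = (\<lambda>_. 0)) \<and> adapted X J Pi_rep pi_rep \<and>
        (\<forall>Pi_rep'. is_rep_M2 (BXJ X J) Pi_rep' \<and> Pi_rep' m2one = id
          \<and> (\<forall>m\<in>M2_of J. Pi_rep' m = (\<lambda>_. 0)) \<and> adapted X J Pi_rep' pi_rep
          \<longrightarrow> (\<forall>m\<in>BXJ X J. Pi_rep' m = Pi_rep m))"
      using pi_1 by (intro exI[of _ "\<lambda>m. pi_rep (upper_left m)"])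
        (simp add: m2one_def adapted_iff_upper_left[OF assms pi pi_1])
  qed
qed

end
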